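(* Fix $R>0$, an integer $T>1$ and $\alpha>1$. Let $\Theta_1=(\alpha,\rho_{r_1},\rho_{d_1},\rho_{s_1},\rho_{0_1},T)$ and $\Theta_2=(\alpha,\rho_{r_2},\rho_{d_2},\rho_{s_2},\rho_{0_2},T)$ with all $\rho$'s positive. If $\rho_{r_2}\ge\rho_{r_1}$, $\rho_{d_2}\ge\rho_{d_1}$, $\rho_{s_2}\ge\rho_{s_1}$ and $\rho_{0_2}\ge\rho_{0_1}$, with at least one of these inequalities strict, then $\zeta^\star_{zf}(R,\Theta_1)>\zeta^\star_{zf}(R,\Theta_2)$.
   Context: For $\Theta=(\alpha,\rho_r,\rho_d,\rho_s,\rho_0,T)$ with $\alpha>1$, $\rho_r,\rho_d,\rho_s,\rho_0>0$, integer $T>1$, and $R>0$: for $M>K$, $1\le K\le\tau<T$ let $$\gamma_u=\frac{K+\tau}{2\tau(M-K)}\Big(2^{\frac{R}{K(1-\tau/T)}}-1\Big)+\sqrt{\Big(\frac{K+\tau}{2\tau(M-K)}\Big(2^{\frac{R}{K(1-\tau/T)}}-1\Big)\Big)^2+\frac{2^{\frac{R}{K(1-\tau/T)}}-1}{\tau(M-K)}}$$ and define $\zeta_{zf}(M,K,\tau,R,\Theta)>0$ by $$\frac{R}{\zeta_{zf}(M,K,\tau,R,\Theta)}=\alpha K\gamma_u+\rho_s+K\Big(\rho_d+\frac{8K^2\rho_0}{3T}\Big)+M\Big(\rho_r+2K\rho_0+\frac{4K^2\rho_0}{T}\Big).$$ $\zeta^\star_{zf}(R,\Theta)$ is the maximum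 of $\zeta_{zf}(M,K,\tau,R,\Theta)$ over integers $(M,K,\tau)$ with $1\le K\le\tau<T$ and $M>K$. *)

theory Defs
  imports Complex_Main
begin

type_synonym params = "real \<times> real \<times> real \<times> real \<times> real \<times> nat"

definition gamma_u :: "nat \<Rightarrow> nat \<Rightarrow> nat \<Rightarrow> real \<Rightarrow> nat \<Rightarrow> real" where
  "gamma_u M K \<tau> R T =
     (let E = 2 powr (R / (real K * (1 - real \<tau> / real T))) - 1;
          a = (real K + real \<tau>) / (2 * real \<tau> * (real M - real K)) * E
      in a + sqrt (a^2 + E / (real \<tau> * (real M - real K))))"

definition zeta_zf :: "nat \<Rightarrow> nat \<Rightarrow> nat \<Rightarrow> real \<Rightarrow> params \<Rightarrow> real" where
  "zeta_zf M K \<tau> R \<Theta> =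
     (case \<Theta> of (\<alpha>, \<rho>r, \<rho>d, \<rho>s, \<rho>0, T) \<Rightarrow>
        R / (\<alpha> * real K * gamma_u M K \<tau> R T + \<rho>s
             + real K * (\<rho>d + 8 * (real K)^2 * \<rho>0 / (3 * real T))
             + real M * (\<rho>r + 2 * real K * \<rho>0 + 4 * (real K)^2 * \<rho>0 / real T)))"

definition feasible :: "nat \<Rightarrow> (nat \<times> nat \<times> nat) set" where
  "feasible T = {(M, K, \<tau>). 1 \<le> K \<and> K \<le> \<tau> \<and> \<tau> < T \<and> K < M}"

text \<open>zeta-star: the maximum (attained, as supremum) of zeta_zf over feasible triples.\<close>
definition zeta_star :: "real \<Rightarrow> params \<Rightarrow> real" where
  "zeta_star R \<Theta> =
     Sup ((\<lambda>(M, K, \<tau>). zeta_zf M K \<tau> R \<Theta>) ` feasible (snd (snd (snd (snd (snd \<Theta>))))))"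

end

theory Submission
  imports Defs
begin

text \<open>Write \<open>\<zeta>\<^sub>i = R / c\<^sub>i\<close>, where the cost \<open>c\<^sub>i\<close> is the denominator in the definition of
  \<open>\<zeta>\<^sub>z\<^sub>f\<close> at the feasible triple \<open>i\<close>. Every cost is at least \<open>\<rho>\<^sub>s > 0\<close>, so the supremum
  \<open>S\<close> of the \<open>\<zeta>\<^sub>i\<close> under \<open>\<Theta>\<^sub>1\<close> is finite and positive, and raising the \<open>\<rho>\<close>'s raises every
  cost by at least the total increase \<open>\<delta> > 0\<close>, because the coefficients of the \<open>\<rho>\<close>'s
  are at least 1 and \<open>\<gamma>\<^sub>u\<close> does not depend on them. Since \<open>c\<^sub>i \<ge> R / S\<close>, every value under
  \<open>\<Theta>\<^sub>2\<close> is bounded by \<open>R / (R / S + \<delta>) < S\<close>: the gap survives taking suprema, whether or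
  not the maximum is attained.\<close>

definition zf_cost :: "nat \<Rightarrow> nat \<Rightarrow> nat \<Rightarrow> real \<Rightarrow> params \<Rightarrow> real" where
  "zf_cost M K \<tau> R \<Theta> =
     (case \<Theta> of (\<alpha>, \<rho>r, \<rho>d, \<rho>s, \<rho>0, T) \<Rightarrow>
        \<alpha> * real K * gamma_u M K \<tau> R T + \<rho>s
        + real K * (\<rho>d + 8 * (real K)^2 * \<rho>0 / (3 * real T))
        + real M * (\<rho>r + 2 * real K * \<rho>0 + 4 * (real K)^2 * \<rho>0 / real T))"

lemma zeta_zf_eq_div_zf_cost: "zeta_zf M K \<tau> R \<Theta> = R / zf_cost M K \<tau> R \<Theta>"
  by (simp add: zeta_zf_def zf_cost_def split: prod.split)

lemma gamma_u_nonneg: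
  assumes "R \<ge> 0" "\<tau> \<le> T" "K \<le> M"
  shows "gamma_u M K \<tau> R T \<ge> 0"
proof -
  define E where "E = 2 powr (R / (real K * (1 - real \<tau> / real T))) - 1"
  have "real \<tau> / real T \<le> 1"
    using assms(2) by (cases "T = 0") auto
  then have "R / (real K * (1 - real \<tau> / real T)) \<ge> 0"
    using assms(1) by simp
  then have E: "E \<ge> 0"
    unfolding E_def using ge_one_powr_ge_zero[of 2] by simp
  define a where "a = (real K + real \<tau>) / (2 * real \<tau> * (real M - real K)) * E"
  have "a \<ge> 0" and "E / (real \<tau> * (real M - real K)) \<ge> 0"
    using E assms(3) by (simp_all add: a_def)
  then show ?thesis
    unfolding gamma_u_def Let_def E_def[symmetric] a_def[symmetric] by simp
qed

lemma zf_cost_ge_rho_s: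
  assumes "R \<ge> 0" "\<tau> \<le> T" "K \<le> M" "\<alpha> \<ge> 0" "\<rho>r \<ge> 0" "\<rho>d \<ge> 0" "\<rho>0 \<ge> 0"
  shows "\<rho>s \<le> zf_cost M K \<tau> R (\<alpha>, \<rho>r, \<rho>d, \<rho>s, \<rho>0, T)"
  using assms gamma_u_nonneg[OF assms(1-3)] by (simp add: zf_cost_def)

lemma zf_cost_increase:
  assumes "1 \<le> K" "K \<le> M"
    and "\<rho>r1 \<le> \<rho>r2" "\<rho>d1 \<le> \<rho>d2" "\<rho>s1 \<le> \<rho>s2" "\<rho>01 \<le> \<rho>02"
  shows "zf_cost M K \<tau> R (\<alpha>, \<rho>r1, \<rho>d1, \<rho>s1, \<rho>01, T)
           + ((\<rho>r2 - \<rho>r1) + (\<rho>d2 - \<rho>d1) + (\<rho>s2 - \<rho>s1) + (\<rho>02 - \<rho>01))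
         \<le> zf_cost M K \<tau> R (\<alpha>, \<rho>r2, \<rho>d2, \<rho>s2, \<rho>02, T)"
proof -
  define k m where "k = real K" and "m = real M"
  have k: "1 \<le> k" and m: "k \<le> m"
    using assms(1,2) by (simp_all add: k_def m_def)
  have r: "\<rho>r2 - \<rho>r1 \<le> m * (\<rho>r2 - \<rho>r1)"
    using mult_right_mono[of 1 m "\<rho>r2 - \<rho>r1"] k m assms(3) by simp
  have d: "\<rho>d2 - \<rho>d1 \<le> k * (\<rho>d2 - \<rho>d1)"
    using mult_right_mono[of 1 k "\<rho>d2 - \<rho>d1"] k assms(4) by simp
  have "1 \<le> 2 * m * k"
    using mult_mono[of 1 m 1 k] k m by simp
  then have z: "\<rho>02 - \<rho>01 \<le> 2 * m * k * (\<rho>02 - \<rho>01)"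
    using mult_right_mono[of 1 "2 * m * k" "\<rho>02 - \<rho>01"] assms(6) by simp
  have "0 \<le> k * (8 * k^2 * (\<rho>02 - \<rho>01) / (3 * real T))"
    and "0 \<le> m * (4 * k^2 * (\<rho>02 - \<rho>01) / real T)"
    using k m assms(6) by simp_all
  with r d z show ?thesis
    by (simp add: zf_cost_def flip: k_def m_def) (simp add: algebra_simps diff_divide_distrib)
qed

lemma Sup_divide_less_of_shifted_denominators:
  fixes f g :: "'a \<Rightarrow> real"
  assumes "I \<noteq> {}" "R > 0" "c > 0" "\<delta> > 0"
    and "\<And>i. i \<in> I \<Longrightarrow> c \<le> f i"
    and "\<And>i. i \<in> I \<Longrightarrow> f i + \<delta> \<le> g i"
  shows "Sup ((\<lambda>i. R / g i) ` I) < Sup ((\<lambda>i. R / f i) ` I)"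
proof -
  define S where "S = Sup ((\<lambda>i. R / f i) ` I)"
  have bdd: "bdd_above ((\<lambda>i. R / f i) ` I)"
    using assms(2,3,5) by (intro bdd_aboveI2[of _ _ "R / c"] divide_left_mono)
      (auto intro: mult_pos_pos less_le_trans)
  have le_S: "R / f i \<le> S" if "i \<in> I" for i
    unfolding S_def using bdd that by (intro cSup_upper) auto
  obtain i0 where "i0 \<in> I"
    using assms(1) by blast
  then have "0 < S"
    using le_S[of i0] assms(2,3) assms(5)[of i0] by (smt (verit) divide_pos_pos)
  have "R / g i \<le> R / (R / S + \<delta>)" if "i \<in> I" for i
  proof -
    have "R / S \<le> f i"
      using le_S[OF that] \<open>0 < S\<close> assms(3) assms(5)[OF that] by (simp add: field_simps)
    moreover have "0 < R / S"
      using assms(2) \<open>0 < S\<close> by simp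
    ultimately show ?thesis
      using assms(2,4) assms(6)[OF that]
      by (intro divide_left_mono) (auto intro: mult_pos_pos)
  qed
  then have "Sup ((\<lambda>i. R / g i) ` I) \<le> R / (R / S + \<delta>)"
    using assms(1) by (intro cSup_least) auto
  also have "\<dots> < S"
  proof (rule pos_divide_less_eq[THEN iffD2])
    show "0 < R / S + \<delta>"
      using assms(2,4) \<open>0 < S\<close> by (simp add: add_pos_pos)
    show "R < S * (R / S + \<delta>)"
      using assms(4) \<open>0 < S\<close> by (simp add: distrib_left)
  qed
  finally show ?thesis
    unfolding S_def .
qed

theorem theorem1:
  fixes R \<alpha> \<rho>r1 \<rho>d1 \<rho>s1 \<rho>01 \<rho>r2 \<rho>d2 \<rho>s2 \<rho>02 :: real and T :: nat
  assumes "R > 0" and "T > 1" and "\<alpha> > 1"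
    and "\<rho>r1 > 0" "\<rho>d1 > 0" "\<rho>s1 > 0" "\<rho>01 > 0"
    and "\<rho>r2 > 0" "\<rho>d2 > 0" "\<rho>s2 > 0" "\<rho>02 > 0"
    and "\<rho>r2 \<ge> \<rho>r1" "\<rho>d2 \<ge> \<rho>d1" "\<rho>s2 \<ge> \<rho>s1" "\<rho>02 \<ge> \<rho>01"
    and "\<rho>r2 > \<rho>r1 \<or> \<rho>d2 > \<rho>d1 \<or> \<rho>s2 > \<rho>s1 \<or> \<rho>02 > \<rho>01"
  shows "zeta_star R (\<alpha>, \<rho>r1, \<rho>d1, \<rho>s1, \<rho>01, T) > zeta_star R (\<alpha>, \<rho>r2, \<rho>d2, \<rho>s2, \<rho>02, T)"
proof -
  define cost where "cost \<Theta> = (\<lambda>(M, K, \<tau>). zf_cost M K \<tau> R \<Theta>)" for \<Theta>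
  define \<delta> where "\<delta> = (\<rho>r2 - \<rho>r1) + (\<rho>d2 - \<rho>d1) + (\<rho>s2 - \<rho>s1) + (\<rho>02 - \<rho>01)"
  have zeta_star_eq: "zeta_star R (\<alpha>, \<rho>r, \<rho>d, \<rho>s, \<rho>0, T)
      = Sup ((\<lambda>i. R / cost (\<alpha>, \<rho>r, \<rho>d, \<rho>s, \<rho>0, T) i) ` feasible T)" for \<rho>r \<rho>d \<rho>s \<rho>0
    unfolding zeta_star_def cost_def by (simp add: zeta_zf_eq_div_zf_cost case_prod_unfold)
  have "(2, 1, 1) \<in> feasible T"
    using assms(2) by (simp add: feasible_def)
  moreover have "\<rho>s1 \<le> cost (\<alpha>, \<rho>r1, \<rho>d1, \<rho>s1, \<rho>01, T) i" if "i \<in> feasible T" for i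
    using that assms by (auto simp: cost_def feasible_def intro!: zf_cost_ge_rho_s)
  moreover have "cost (\<alpha>, \<rho>r1, \<rho>d1, \<rho>s1, \<rho>01, T) i + \<delta> \<le> cost (\<alpha>, \<rho>r2, \<rho>d2, \<rho>s2, \<rho>02, T) i" if "i \<in> feasible T" for i
    using that assms by (auto simp: cost_def feasible_def \<delta>_def intro!: zf_cost_increase)
  moreover have "\<delta> > 0"
    unfolding \<delta>_def using assms by linarith
  ultimately show ?thesis
    unfolding zeta_star_eq using assms
    by (intro Sup_divide_less_of_shifted_denominators[where c = \<rho>s1]) auto
qed

end
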